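(* Let $k\ge1$, $G=(V,E)$ an inductively $k$-independent graph with $k$-independence ordering $v_1,\dots,v_n$, $f:2^V\to\mathbb{R}_{\ge0}$ monotone submodular with $f(\emptyset)=0$, and $\beta>0$. Run algorithm PREEMPTIVE-GREEDY (described in the context), let $U$ be the set of all vertices ever contained in $S$ during the run, and for each vertex $v_i$ let $C_i$ be the conflict set computed when $v_i$ is processed. Let $T\subseteq V$ be an independent set of $G$ disjoint from $U$. Then each $u\in U$ belongs to $C_i$ for at most $k$ indices $i$ with $v_i\in T$.
   Context: $N(v)$ is the neighbourhood of $v$ (excluding $v$); $G$ is inductively $k$-independent with $k$-independence ordering $v_1,\dots,v_n$ if for every $i$, $G[N(v_i)\cap\{v_i,\dots,v_n\}]$ has no independent set of size more than $k$. Order $V$ by $v_1<\dots<v_n$. For $S\subseteq V$: $f_S(v)=f(S\cup\{v\})-f(S)$, and $\nu_f(S,u)=f_{S'}(u)$ where $S'=\{s\in S:s<u\}$. Algorithm PREEMPTIVE-GREEDY (parameter $\beta>0$): start with $S=\emptyset$; for $i=1,\dots,n$: let $C_i=N(v_i)\cap S$ for the current $S$; if $f_S(v_i)\ge(1+\beta)\sum_{u\in C_i}\nu_f(S,u)$, replace $S$ by $(S\setminus C_i)\cup\{v_i\}$. Return the final $S$. *)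

theory Defs
  imports Complex_Main
begin

text \<open>Graphs: vertex set V = set vs, where the distinct list vs is the
  k-independence ordering v_1,...,v_n (vs ! (i-1) = v_i); edges given by a
  symmetric irreflexive relation E.\<close>

definition nbr :: "('a \<Rightarrow> 'a \<Rightarrow> bool) \<Rightarrow> 'a \<Rightarrow> 'a set" where
  "nbr E v = {u. E v u}"

definition indep_set :: "('a \<Rightarrow> 'a \<Rightarrow> bool) \<Rightarrow> 'a set \<Rightarrow> bool" where
  "indep_set E A \<longleftrightarrow> (\<forall>x\<in>A. \<forall>y\<in>A. \<not> E x y)"

definition simple_graph :: "'a set \<Rightarrow> ('a \<Rightarrow> 'a \<Rightarrow> bool) \<Rightarrow> bool" where
  "simple_graph V E \<longleftrightarrow> (\<forall>x y. E x y \<longrightarrow> x \<in> V \<and> y \<in> V \<and> E y x \<and> x \<noteq> y)"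

definition k_indep_ordering :: "('a \<Rightarrow> 'a \<Rightarrow> bool) \<Rightarrow> nat \<Rightarrow> 'a list \<Rightarrow> bool" where
  "k_indep_ordering E k vs \<longleftrightarrow> distinct vs \<and>
     (\<forall>i < length vs. \<forall>I. I \<subseteq> nbr E (vs ! i) \<inter> set (drop i vs) \<and> indep_set E I
        \<longrightarrow> card I \<le> k)"

definition monotone_set_fun :: "'a set \<Rightarrow> ('a set \<Rightarrow> real) \<Rightarrow> bool" where
  "monotone_set_fun V f \<longleftrightarrow> (\<forall>A B. A \<subseteq> B \<and> B \<subseteq> V \<longrightarrow> f A \<le> f B)"

definition submodular :: "'a set \<Rightarrow> ('a set \<Rightarrow> real) \<Rightarrow> bool" where
  "submodular V f \<longleftrightarrow> (\<forall>A B. A \<subseteq> V \<and> B \<subseteq> V \<longrightarrow> f (A \<union> B) + f (A \<inter> B) \<le> f A + f B)"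

definition marg :: "('a set \<Rightarrow> real) \<Rightarrow> 'a set \<Rightarrow> 'a \<Rightarrow> real" where
  "marg f S v = f (S \<union> {v}) - f S"

definition pos :: "'a list \<Rightarrow> 'a \<Rightarrow> nat" where
  "pos vs x = (THE i. i < length vs \<and> vs ! i = x)"

definition nu :: "'a list \<Rightarrow> ('a set \<Rightarrow> real) \<Rightarrow> 'a set \<Rightarrow> 'a \<Rightarrow> real" where
  "nu vs f S u = marg f {s \<in> S. pos vs s < pos vs u} u"

definition conflict :: "('a \<Rightarrow> 'a \<Rightarrow> bool) \<Rightarrow> 'a set \<Rightarrow> 'a \<Rightarrow> 'a set" where
  "conflict E S v = nbr E v \<inter> S"

definition pg_step :: "('a \<Rightarrow> 'a \<Rightarrow> bool) \<Rightarrow> ('a set \<Rightarrow> real) \<Rightarrow> real \<Rightarrow> 'a list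
    \<Rightarrow> 'a \<Rightarrow> 'a set \<Rightarrow> 'a set" where
  "pg_step E f \<beta> vs v S =
     (if marg f S v \<ge> (1 + \<beta>) * (\<Sum>u\<in>conflict E S v. nu vs f S u)
      then (S - conflict E S v) \<union> {v} else S)"

text \<open>pg_state E f \<beta> vs i is the set S before processing v_{i+1} = vs ! i
  (i.e. after processing the first i vertices).\<close>
primrec pg_state :: "('a \<Rightarrow> 'a \<Rightarrow> bool) \<Rightarrow> ('a set \<Rightarrow> real) \<Rightarrow> real \<Rightarrow> 'a list
    \<Rightarrow> nat \<Rightarrow> 'a set" where
  "pg_state E f \<beta> vs 0 = {}"
| "pg_state E f \<beta> vs (Suc i) = pg_step E f \<beta> vs (vs ! i) (pg_state E f \<beta> vs i)"

definition pg_conflict :: "('a \<Rightarrow> 'a \<Rightarrow> bool) \<Rightarrow> ('a set \<Rightarrow> real) \<Rightarrow> real \<Rightarrow> 'a list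
    \<Rightarrow> nat \<Rightarrow> 'a set" where
  "pg_conflict E f \<beta> vs i = conflict E (pg_state E f \<beta> vs i) (vs ! i)"

definition pg_ever :: "('a \<Rightarrow> 'a \<Rightarrow> bool) \<Rightarrow> ('a set \<Rightarrow> real) \<Rightarrow> real \<Rightarrow> 'a list \<Rightarrow> 'a set" where
  "pg_ever E f \<beta> vs = (\<Union>i \<le> length vs. pg_state E f \<beta> vs i)"

end

theory Submission
  imports Defs
begin

text \<open>A vertex u = v_j enters S only when it is processed, so u \<in> C_i forces j < i,
  and then v_i is a later neighbour of v_j. The vertices
  v_i of the independent set T with u \<in> C_i therefore form an independent set in the
  neighbourhood of v_j among v_j, ..., v_n, which has at most k elements by the
  k-independence of the ordering.\<close>

lemma indep_set_subset: "indep_set E B \<Longrightarrow> A \<subseteq> B \<Longrightarrow> indep_set E A"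
  by (auto simp: indep_set_def)

lemma nth_in_set_drop: "j \<le> i \<Longrightarrow> i < length vs \<Longrightarrow> vs ! i \<in> set (drop j vs)"
  using nth_mem[of "i - j" "drop j vs"] by simp

lemma nth_in_set_take_imp_less:
  assumes "distinct vs" "j < length vs" "vs ! j \<in> set (take i vs)"
  shows "j < i"
proof (rule ccontr)
  assume "\<not> j < i"
  then have "vs ! j \<in> set (drop i vs)"
    using assms(2) by (simp add: nth_in_set_drop)
  then show False
    using assms(3) set_take_disj_set_drop_if_distinct[OF assms(1), of i i] by blast
qed

lemma card_indep_later_nbrs_le:
  assumes "k_indep_ordering E k vs" "j < length vs" "indep_set E ((!) vs ` A)"
    and "\<And>i. i \<in> A \<Longrightarrow> j \<le> i \<and> i < length vs \<and> E (vs ! j) (vs ! i)"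
  shows "card A \<le> k"
proof -
  have "inj_on ((!) vs) A"
    using assms(1,4) by (auto simp: k_indep_ordering_def inj_on_def nth_eq_iff_index_eq)
  moreover have "(!) vs ` A \<subseteq> nbr E (vs ! j) \<inter> set (drop j vs)"
    using assms(4) by (auto simp: nbr_def nth_in_set_drop)
  then have "card ((!) vs ` A) \<le> k"
    using assms(1-3) by (simp add: k_indep_ordering_def)
  ultimately show ?thesis
    by (simp add: card_image)
qed

lemma pg_state_subset_take:
  "i \<le> length vs \<Longrightarrow> pg_state E f \<beta> vs i \<subseteq> set (take i vs)"
proof (induction i)
  case 0
  then show ?case by simp
next
  case (Suc i)
  have "pg_state E f \<beta> vs (Suc i) \<subseteq> pg_state E f \<beta> vs i \<union> {vs ! i}"
    by (auto simp: pg_step_def)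
  also have "\<dots> \<subseteq> set (take (Suc i) vs)"
    using Suc by (auto simp: take_Suc_conv_app_nth)
  finally show ?case .
qed

lemma pg_ever_subset: "pg_ever E f \<beta> vs \<subseteq> set vs"
  using pg_state_subset_take by (fastforce simp: pg_ever_def dest: in_set_takeD)

lemma pg_conflict_earlier_nbr:
  assumes "distinct vs" "i < length vs" "j < length vs" "vs ! j \<in> pg_conflict E f \<beta> vs i"
  shows "j < i \<and> E (vs ! i) (vs ! j)"
proof -
  have "vs ! j \<in> set (take i vs)"
    using assms(2,4) pg_state_subset_take[of i vs E f \<beta>]
    by (auto simp: pg_conflict_def conflict_def)
  then show ?thesis
    using assms by (auto simp: nth_in_set_take_imp_less pg_conflict_def conflict_def nbr_def)
qed

theorem lemma15:
  fixes E :: "'a \<Rightarrow> 'a \<Rightarrow> bool" and vs :: "'a list" and k :: nat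
    and f :: "'a set \<Rightarrow> real" and \<beta> :: real and T :: "'a set"
  assumes "k \<ge> 1"
    and "simple_graph (set vs) E"
    and "k_indep_ordering E k vs"
    and "\<forall>A \<subseteq> set vs. f A \<ge> 0"
    and "monotone_set_fun (set vs) f"
    and "submodular (set vs) f"
    and "f {} = 0"
    and "\<beta> > 0"
    and "T \<subseteq> set vs" and "indep_set E T"
    and "T \<inter> pg_ever E f \<beta> vs = {}"
  shows "\<forall>u \<in> pg_ever E f \<beta> vs.
           card {i. i < length vs \<and> vs ! i \<in> T \<and> u \<in> pg_conflict E f \<beta> vs i} \<le> k"
proof
  fix u assume "u \<in> pg_ever E f \<beta> vs"
  then obtain j where j: "j < length vs" "vs ! j = u"
    using pg_ever_subset by (fastforce simp: in_set_conv_nth)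
  let ?A = "{i. i < length vs \<and> vs ! i \<in> T \<and> u \<in> pg_conflict E f \<beta> vs i}"
  have "distinct vs"
    using assms(3) by (simp add: k_indep_ordering_def)
  then have "j \<le> i \<and> i < length vs \<and> E (vs ! j) (vs ! i)" if "i \<in> ?A" for i
    using that j pg_conflict_earlier_nbr[of vs i j E f \<beta>] assms(2)
    by (auto simp: simple_graph_def)
  moreover have "indep_set E ((!) vs ` ?A)"
    by (rule indep_set_subset[OF assms(10)]) auto
  ultimately show "card ?A \<le> k"
    using card_indep_later_nbrs_le[OF assms(3) j(1)] by blast
qed

end
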